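(* Let $t$ be odd and let $n_1,\dots,n_j$ be nonnegative integers. Then $\mathcal{L}^{(t)}_L\big(\prod_{i=1}^{j}L^{(t)}_{n_i}(x)\big)$ equals the number of inhomogeneous coverings of $K_{n_1,n_1}\sqcup\dots\sqcup K_{n_j,n_j}$ by $t$-paths, i.e. the number of sets of pairwise vertex-disjoint $t$-paths covering all vertices of the complete bipartite graph $K_{A,B}$, where $A$ (resp. $B$) is the disjoint union of the left (resp. right) parts of $K_{n_1,n_1},\dots,K_{n_j,n_j}$, such that no path has all its vertices in a single $K_{n_i,n_i}$.
   Context: Let $t\ge1$ be odd and $k=(t+1)/2$. In a complete bipartite graph, a $t$-path is a subgraph isomorphic to a path with $t$ edges (it has $k$ vertices on each side). $L^{(t)}_n$ is the polynomial with $L^{(t)}_n(x^2)=\sum_F(-1)^{|F|}x^{\,2n-(t+1)|F|}$, the sum over all families $F$ of pairwise vertex-disjoint $t$-paths in $K_{n,n}$. Let $\mu^{(t)}_n$ be the number of coverings of all vertices of $K_{n,n}$ by pairwise vertex-disjoint $t$-paths ($\mu^{(t)}_0=1$), and let $\mathcal{L}^{(t)}_L$ be the linear functional with $\mathcal{L}^{(t)}_L(x^n)=\mu^{(t)}_n$. *)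

theory Defs
  imports "HOL-Computational_Algebra.Polynomial"
begin

text \<open>Complete bipartite graph K_{A,B}: vertices Inl a (a in A, left part) and
Inr b (b in B, right part); edges are the pairs (a,b) in A x B.
A subgraph that is a path is represented by its edge set (its vertex set is
determined by the edges since t >= 1).\<close>

definition kb_adj :: "'a set \<Rightarrow> 'b set \<Rightarrow> ('a + 'b) \<Rightarrow> ('a + 'b) \<Rightarrow> bool" where
  "kb_adj A B u v \<longleftrightarrow> (\<exists>a\<in>A. \<exists>b\<in>B. (u = Inl a \<and> v = Inr b) \<or> (u = Inr b \<and> v = Inl a))"

definition path_edges :: "('a + 'b) list \<Rightarrow> ('a \<times> 'b) set" where
  "path_edges vs = {(a, b). \<exists>i. i + 1 < length vs \<and> {vs ! i, vs ! (i + 1)} = {Inl a, Inr b}}"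

definition pverts :: "('a \<times> 'b) set \<Rightarrow> ('a + 'b) set" where
  "pverts P = Inl ` fst ` P \<union> Inr ` snd ` P"

definition tpaths :: "nat \<Rightarrow> 'a set \<Rightarrow> 'b set \<Rightarrow> ('a \<times> 'b) set set" where
  "tpaths t A B = {path_edges vs | vs. length vs = t + 1 \<and> distinct vs \<and>
      (\<forall>i<t. kb_adj A B (vs ! i) (vs ! (i + 1)))}"

definition path_families :: "nat \<Rightarrow> 'a set \<Rightarrow> 'b set \<Rightarrow> ('a \<times> 'b) set set set" where
  "path_families t A B = {F. F \<subseteq> tpaths t A B \<and>
      (\<forall>P\<in>F. \<forall>Q\<in>F. P \<noteq> Q \<longrightarrow> pverts P \<inter> pverts Q = {})}"

definition path_coverings :: "nat \<Rightarrow> 'a set \<Rightarrow> 'b set \<Rightarrow> ('a \<times> 'b) set set set" where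
  "path_coverings t A B = {F \<in> path_families t A B. (\<Union>P\<in>F. pverts P) = Inl ` A \<union> Inr ` B}"

definition mu :: "nat \<Rightarrow> nat \<Rightarrow> nat" where
  "mu t n = card (path_coverings t {..<n} {..<n})"

text \<open>L^(t)_n, with L_n(x^2) = sum_F (-1)^|F| x^(2n-(t+1)|F|), i.e.
L_n(y) = sum_F (-1)^|F| y^(n - ((t+1) div 2) |F|).\<close>
definition Lpoly :: "nat \<Rightarrow> nat \<Rightarrow> int poly" where
  "Lpoly t n = (\<Sum>F\<in>path_families t {..<n} {..<n}.
      monom ((-1) ^ card F) (n - ((t + 1) div 2) * card F))"

definition Lfun :: "nat \<Rightarrow> int poly \<Rightarrow> int" where
  "Lfun t p = (\<Sum>i\<le>degree p. coeff p i * int (mu t i))"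

text \<open>Disjoint union of K_{n_1,n_1},...,K_{n_j,n_j}: both sides are
{(i,a). i < j, a < n_i}; the block of a vertex is its first component.\<close>
definition blocks :: "nat list \<Rightarrow> (nat \<times> nat) set" where
  "blocks ns = {(i, a). i < length ns \<and> a < ns ! i}"

definition blk :: "(nat \<times> nat) + (nat \<times> nat) \<Rightarrow> nat" where
  "blk v = (case v of Inl x \<Rightarrow> fst x | Inr y \<Rightarrow> fst y)"

definition inhom_coverings :: "nat \<Rightarrow> nat list \<Rightarrow> ((nat \<times> nat) \<times> (nat \<times> nat)) set set set" where
  "inhom_coverings t ns = {F \<in> path_coverings t (blocks ns) (blocks ns).
      \<forall>P\<in>F. \<not> (\<exists>i. \<forall>v\<in>pverts P. blk v = i)}"

end

theory Submission
  imports Defs "HOL-Library.FuncSet"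
begin

(* Write k = (t+1)/2 and N = n_1 + ... + n_j; let V be the vertex set of each side of
   K_{V,V}, the disjoint union of the blocks K_{n_i,n_i}.  A family of disjoint t-paths in K_{V,V}
   all of whose paths lie inside single blocks ("homogeneous" family) is the same thing as a tuple
   of families, one in each block.  Hence the product of the L_{n_i} expands as
     prod_i L_{n_i} = sum over homogeneous families F of (-1)^|F| x^(N - k|F|).
   Each t-path uses exactly k vertices on each side, and the number of coverings of K_{m,m} depends
   only on m, so mu_{N - k|F|} counts the coverings of the vertices of K_{V,V} left uncovered by F.
   Applying the functional gives sum_F (-1)^|F| #(coverings extending F), i.e. a sum over pairs
   (H, F) with H a covering and F a set of homogeneous paths of H; the inner alternating sum over F
   vanishes unless H has no homogeneous path, leaving the number of inhomogeneous coverings. *)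

section \<open>t-paths as alternating vertex lists\<close>

definition alternating :: "('a + 'b) list \<Rightarrow> bool" where
  "alternating vs \<longleftrightarrow> (\<forall>i. i + 1 < length vs \<longrightarrow> isl (vs ! i) \<noteq> isl (vs ! (i + 1)))"

lemma kb_adj_iff:
  "kb_adj A B u v \<longleftrightarrow> isl u \<noteq> isl v \<and> u \<in> Inl ` A \<union> Inr ` B \<and> v \<in> Inl ` A \<union> Inr ` B"
  by (cases u; cases v) (auto simp: kb_adj_def)

lemma opposite_sides_pair: "isl x \<noteq> isl y \<Longrightarrow> \<exists>a b. {x, y} = {Inl a, Inr b}"
  by (cases x; cases y) auto

lemma pverts_Inl_iff: "Inl a \<in> pverts P \<longleftrightarrow> a \<in> fst ` P"
  by (auto simp: pverts_def)

lemma pverts_Inr_iff: "Inr b \<in> pverts P \<longleftrightarrow> b \<in> snd ` P"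
  by (auto simp: pverts_def)

lemma Inl_fst_image: "Inl ` fst ` P = {v \<in> pverts P. isl v}"
  by (auto simp: pverts_def)

lemma Inr_snd_image: "Inr ` snd ` P = {v \<in> pverts P. \<not> isl v}"
  by (auto simp: pverts_def)

lemma pverts_subset_iff: "pverts P \<subseteq> Inl ` A \<union> Inr ` B \<longleftrightarrow> P \<subseteq> A \<times> B"
  by (force simp: pverts_def)

lemma consecutive_in_pverts:
  assumes "alternating vs" "i + 1 < length vs"
  shows "vs ! i \<in> pverts (path_edges vs)" "vs ! (i + 1) \<in> pverts (path_edges vs)"
proof -
  from assms obtain a b where ab: "{vs ! i, vs ! (i + 1)} = {Inl a, Inr b}"
    using opposite_sides_pair unfolding alternating_def by blast
  hence "(a, b) \<in> path_edges vs" using assms(2) unfolding path_edges_def by blast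
  hence "Inl a \<in> pverts (path_edges vs)" "Inr b \<in> pverts (path_edges vs)"
    by (force simp: pverts_def)+
  thus "vs ! i \<in> pverts (path_edges vs)" "vs ! (i + 1) \<in> pverts (path_edges vs)"
    using ab by (auto simp: doubleton_eq_iff)
qed

lemma pverts_path_edges:
  assumes "alternating vs" "2 \<le> length vs"
  shows "pverts (path_edges vs) = set vs"
proof
  show "pverts (path_edges vs) \<subseteq> set vs"
  proof
    fix x assume "x \<in> pverts (path_edges vs)"
    then obtain a b i where "i + 1 < length vs" "{vs ! i, vs ! (i + 1)} = {Inl a, Inr b}"
      "x = Inl a \<or> x = Inr b"
      unfolding pverts_def path_edges_def by auto
    thus "x \<in> set vs" by (metis insert_iff nth_mem add_lessD1 singletonD)
  qed
  show "set vs \<subseteq> pverts (path_edges vs)"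
  proof
    fix x assume "x \<in> set vs"
    then obtain j where j: "j < length vs" "x = vs ! j" by (auto simp: in_set_conv_nth)
    show "x \<in> pverts (path_edges vs)"
    proof (cases "j + 1 < length vs")
      case True thus ?thesis using consecutive_in_pverts[OF assms(1) True] j by simp
    next
      case False
      hence "j - 1 + 1 < length vs" "j - 1 + 1 = j" using j assms(2) by auto
      thus ?thesis using consecutive_in_pverts(2)[OF assms(1), of "j - 1"] j by simp
    qed
  qed
qed

lemma tpaths_alternating:
  assumes "t > 0"
  shows "P \<in> tpaths t A B \<longleftrightarrow> (\<exists>vs. P = path_edges vs \<and> length vs = t + 1 \<and> distinct vs \<and>
           alternating vs \<and> set vs \<subseteq> Inl ` A \<union> Inr ` B)"
proof -
  have "(\<forall>i<t. kb_adj A B (vs ! i) (vs ! (i + 1))) \<longleftrightarrow>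
        alternating vs \<and> set vs \<subseteq> Inl ` A \<union> Inr ` B" if len: "length vs = t + 1" for vs :: "('a + 'b) list"
  proof
    assume adj: "\<forall>i<t. kb_adj A B (vs ! i) (vs ! (i + 1))"
    have "vs ! j \<in> Inl ` A \<union> Inr ` B" if "j < length vs" for j
    proof (cases "j < t")
      case True thus ?thesis using adj unfolding kb_adj_iff by blast
    next
      case False
      hence "j - 1 < t" "j - 1 + 1 = j" using that len assms by auto
      thus ?thesis using adj unfolding kb_adj_iff by metis
    qed
    hence "set vs \<subseteq> Inl ` A \<union> Inr ` B" by (metis in_set_conv_nth subsetI)
    moreover have "alternating vs" using adj len unfolding alternating_def kb_adj_iff by auto
    ultimately show "alternating vs \<and> set vs \<subseteq> Inl ` A \<union> Inr ` B" by blast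
  next
    assume "alternating vs \<and> set vs \<subseteq> Inl ` A \<union> Inr ` B"
    thus "\<forall>i<t. kb_adj A B (vs ! i) (vs ! (i + 1))"
      using len unfolding alternating_def kb_adj_iff by (auto simp: subset_iff)
  qed
  thus ?thesis unfolding tpaths_def by blast
qed

lemma tpath_vertices:
  assumes "t > 0" "P \<in> tpaths t A B"
  shows "pverts P \<subseteq> Inl ` A \<union> Inr ` B" "pverts P \<noteq> {}" "P \<subseteq> A \<times> B" "P \<noteq> {}"
proof -
  obtain vs where vs: "P = path_edges vs" "length vs = t + 1" "alternating vs"
    "set vs \<subseteq> Inl ` A \<union> Inr ` B" using assms(2)[unfolded tpaths_alternating[OF assms(1)]] by blast
  have pv: "pverts P = set vs" using pverts_path_edges[OF vs(3)] vs(1,2) assms(1) by simp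
  show sub: "pverts P \<subseteq> Inl ` A \<union> Inr ` B" and ne: "pverts P \<noteq> {}" using pv vs by auto
  show "P \<subseteq> A \<times> B" using sub pverts_subset_iff by blast
  show "P \<noteq> {}" using ne by (auto simp: pverts_def)
qed

lemma tpaths_mono: "A \<subseteq> A' \<Longrightarrow> B \<subseteq> B' \<Longrightarrow> tpaths t A B \<subseteq> tpaths t A' B'"
  unfolding tpaths_def kb_adj_def by blast

lemma tpaths_restrict:
  assumes "t > 0"
  shows "P \<in> tpaths t A B \<longleftrightarrow> P \<in> tpaths t UNIV UNIV \<and> pverts P \<subseteq> Inl ` A \<union> Inr ` B"
proof
  assume "P \<in> tpaths t A B"
  thus "P \<in> tpaths t UNIV UNIV \<and> pverts P \<subseteq> Inl ` A \<union> Inr ` B"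
    using tpath_vertices[OF assms] tpaths_mono[of A UNIV B UNIV t] by blast
next
  assume h: "P \<in> tpaths t UNIV UNIV \<and> pverts P \<subseteq> Inl ` A \<union> Inr ` B"
  then obtain vs where vs: "P = path_edges vs" "length vs = t + 1" "distinct vs" "alternating vs"
    using h[unfolded tpaths_alternating[OF assms]] by blast
  have "pverts P = set vs" using pverts_path_edges[OF vs(4)] vs(1,2) assms by simp
  thus "P \<in> tpaths t A B" unfolding tpaths_alternating[OF assms] using vs h by auto
qed

lemma alternating_Cons2: "alternating (x # y # r) \<Longrightarrow> alternating r \<and> isl x \<noteq> isl y"
proof -
  assume a: "alternating (x # y # r)"
  have "isl x \<noteq> isl y" using a[unfolded alternating_def, rule_format, of 0] by simp
  moreover have "alternating r" unfolding alternating_def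
  proof (intro allI impI)
    fix i assume "i + 1 < length r"
    hence "i + 2 + 1 < length (x # y # r)" by simp
    hence "isl ((x # y # r) ! (i + 2)) \<noteq> isl ((x # y # r) ! (i + 2 + 1))"
      using a unfolding alternating_def by blast
    thus "isl (r ! i) \<noteq> isl (r ! (i + 1))" by (simp add: numeral_2_eq_2)
  qed
  ultimately show ?thesis by simp
qed

lemma alternating_count_left:
  "alternating vs \<Longrightarrow> length vs = 2 * m \<Longrightarrow> length (filter isl vs) = m"
proof (induction m arbitrary: vs)
  case 0 thus ?case by simp
next
  case (Suc m)
  then obtain x y r where v: "vs = x # y # r" "length r = 2 * m"
    by (cases vs; cases "tl vs") auto
  have "alternating r" "isl x \<noteq> isl y" using alternating_Cons2 Suc.prems v by blast+
  thus ?case using Suc.IH[of r] v by auto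
qed

lemma tpath_sides_card:
  assumes "odd t" "P \<in> tpaths t A B"
  shows "card (fst ` P) = (t + 1) div 2" "card (snd ` P) = (t + 1) div 2"
proof -
  have t: "t > 0" using assms by (cases t) auto
  obtain vs where vs: "P = path_edges vs" "length vs = t + 1" "distinct vs" "alternating vs"
    using assms(2)[unfolded tpaths_alternating[OF t]] by blast
  have pv: "pverts P = set vs" using pverts_path_edges[OF vs(4)] vs(1,2) t by simp
  have len: "length vs = 2 * ((t + 1) div 2)" using assms(1) vs(2) by simp
  have left: "length (filter isl vs) = (t + 1) div 2"
    using alternating_count_left[OF vs(4) len] .
  have right: "length (filter (\<lambda>v. \<not> isl v) vs) = (t + 1) div 2"
    using sum_length_filter_compl[of isl vs] left len by simp
  have "card (fst ` P) = card (Inl ` fst ` P :: ('a + 'b) set)" by (simp add: card_image)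
  also have "\<dots> = length (filter isl vs)"
    unfolding Inl_fst_image pv by (metis distinct_card distinct_filter set_filter vs(3))
  finally show "card (fst ` P) = (t + 1) div 2" using left by simp
  have "card (snd ` P) = card (Inr ` snd ` P :: ('a + 'b) set)" by (simp add: card_image)
  also have "\<dots> = length (filter (\<lambda>v. \<not> isl v) vs)"
    unfolding Inr_snd_image pv by (metis distinct_card distinct_filter set_filter vs(3))
  finally show "card (snd ` P) = (t + 1) div 2" using right by simp
qed

section \<open>Invariance under relabelling\<close>

lemma path_edges_map:
  assumes "alternating vs"
  shows "path_edges (map (map_sum f g) vs) = map_prod f g ` path_edges vs"
proof
  show "path_edges (map (map_sum f g) vs) \<subseteq> map_prod f g ` path_edges vs"
  proof
    fix x assume "x \<in> path_edges (map (map_sum f g) vs)"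
    then obtain a' b' i where x: "x = (a', b')" "i + 1 < length vs"
      "{map_sum f g (vs ! i), map_sum f g (vs ! (i + 1))} = {Inl a', Inr b'}"
      unfolding path_edges_def by auto
    obtain a b where ab: "{vs ! i, vs ! (i + 1)} = {Inl a, Inr b}"
      using opposite_sides_pair assms x(2) unfolding alternating_def by blast
    have "map_sum f g ` {vs ! i, vs ! (i + 1)} = {Inl (f a), Inr (g b)}" using ab by simp
    hence "{Inl (f a), Inr (g b)} = {Inl a', Inr b'}" using x(3) by simp
    hence "a' = f a" "b' = g b" by (auto simp: doubleton_eq_iff)
    moreover have "(a, b) \<in> path_edges vs" using ab x(2) unfolding path_edges_def by blast
    ultimately show "x \<in> map_prod f g ` path_edges vs" using x(1) by force
  qed
  show "map_prod f g ` path_edges vs \<subseteq> path_edges (map (map_sum f g) vs)"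
  proof
    fix x assume "x \<in> map_prod f g ` path_edges vs"
    then obtain a b i where x: "x = (f a, g b)" "i + 1 < length vs"
      "{vs ! i, vs ! (i + 1)} = {Inl a, Inr b}"
      unfolding path_edges_def by auto
    have "map_sum f g ` {vs ! i, vs ! (i + 1)} = {Inl (f a), Inr (g b)}" using x(3) by simp
    hence "{map (map_sum f g) vs ! i, map (map_sum f g) vs ! (i + 1)} = {Inl (f a), Inr (g b)}"
      using x(2) by simp
    thus "x \<in> path_edges (map (map_sum f g) vs)" using x(1,2) unfolding path_edges_def by force
  qed
qed

lemma inj_on_map_sum:
  assumes "inj_on f A" "inj_on g B"
  shows "inj_on (map_sum f g) (Inl ` A \<union> Inr ` B)"
proof (rule inj_onI)
  fix x y assume x: "x \<in> Inl ` A \<union> Inr ` B" and y: "y \<in> Inl ` A \<union> Inr ` B"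
    and eq: "map_sum f g x = map_sum f g y"
  from x y show "x = y"
  proof (elim UnE imageE)
    fix a a' assume "x = Inl a" "a \<in> A" "y = Inl a'" "a' \<in> A"
    thus ?thesis using eq inj_onD[OF assms(1)] by simp
  next
    fix b b' assume "x = Inr b" "b \<in> B" "y = Inr b'" "b' \<in> B"
    thus ?thesis using eq inj_onD[OF assms(2)] by simp
  qed (use eq in simp_all)
qed

lemma pverts_image: "pverts (map_prod f g ` P) = map_sum f g ` pverts P"
  unfolding pverts_def by (simp add: image_Un image_image)

lemma tpaths_map:
  assumes t: "t > 0" and P: "P \<in> tpaths t A B" and f: "inj_on f A" and g: "inj_on g B"
  shows "map_prod f g ` P \<in> tpaths t (f ` A) (g ` B)"
proof -
  obtain vs where vs: "P = path_edges vs" "length vs = t + 1" "distinct vs" "alternating vs"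
    "set vs \<subseteq> Inl ` A \<union> Inr ` B" using P[unfolded tpaths_alternating[OF t]] by blast
  let ?ws = "map (map_sum f g) vs"
  have "path_edges ?ws = map_prod f g ` P" using path_edges_map[OF vs(4)] vs(1) by simp
  moreover have "distinct ?ws" using vs(3) inj_on_subset[OF inj_on_map_sum[OF f g] vs(5)]
    by (simp add: distinct_map)
  moreover have "alternating ?ws" using vs(4) unfolding alternating_def by (simp add: isl_map_sum)
  moreover have "set ?ws \<subseteq> Inl ` f ` A \<union> Inr ` g ` B" using vs(5) by auto
  ultimately show ?thesis unfolding tpaths_alternating[OF t] using vs(2) by (metis length_map)
qed

lemma path_families_tpath: "F \<in> path_families t A B \<Longrightarrow> P \<in> F \<Longrightarrow> P \<in> tpaths t A B"
  unfolding path_families_def by blast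

lemma path_families_disjoint:
  "F \<in> path_families t A B \<Longrightarrow> P \<in> F \<Longrightarrow> Q \<in> F \<Longrightarrow> P \<noteq> Q \<Longrightarrow> pverts P \<inter> pverts Q = {}"
  unfolding path_families_def by blast

lemma families_map:
  assumes t: "t > 0" and F: "F \<in> path_families t A B" and f: "inj_on f A" and g: "inj_on g B"
  shows "image (map_prod f g) ` F \<in> path_families t (f ` A) (g ` B)"
  unfolding path_families_def
proof (intro CollectI conjI ballI impI subsetI)
  fix P' assume "P' \<in> image (map_prod f g) ` F"
  then obtain P where "P \<in> F" "P' = map_prod f g ` P" by blast
  thus "P' \<in> tpaths t (f ` A) (g ` B)" using tpaths_map[OF t path_families_tpath[OF F] f g] by simp
next
  fix P' Q' assume h: "P' \<in> image (map_prod f g) ` F" "Q' \<in> image (map_prod f g) ` F" "P' \<noteq> Q'"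
  then obtain P Q where PQ: "P \<in> F" "P' = map_prod f g ` P" "Q \<in> F" "Q' = map_prod f g ` Q"
    by blast
  hence disj: "pverts P \<inter> pverts Q = {}" using h(3) path_families_disjoint[OF F] by blast
  have "pverts P \<subseteq> Inl ` A \<union> Inr ` B" "pverts Q \<subseteq> Inl ` A \<union> Inr ` B"
    using tpath_vertices(1)[OF t path_families_tpath[OF F]] PQ by auto
  hence "map_sum f g ` pverts P \<inter> map_sum f g ` pverts Q = map_sum f g ` (pverts P \<inter> pverts Q)"
    using inj_on_image_Int[OF inj_on_map_sum[OF f g]] by simp
  thus "pverts P' \<inter> pverts Q' = {}" using disj PQ by (simp add: pverts_image)
qed

lemma coverings_map:
  assumes t: "t > 0" and F: "F \<in> path_coverings t A B" and f: "inj_on f A" and g: "inj_on g B"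
  shows "image (map_prod f g) ` F \<in> path_coverings t (f ` A) (g ` B)"
proof -
  have F1: "F \<in> path_families t A B" and F2: "(\<Union>P\<in>F. pverts P) = Inl ` A \<union> Inr ` B"
    using F unfolding path_coverings_def by auto
  have "(\<Union>P\<in>image (map_prod f g) ` F. pverts P) = map_sum f g ` (\<Union>P\<in>F. pverts P)"
    by (auto simp: pverts_image)
  also have "\<dots> = Inl ` f ` A \<union> Inr ` g ` B" using F2 by (simp add: image_Un image_image)
  finally show ?thesis using families_map[OF t F1 f g] unfolding path_coverings_def by blast
qed

lemma families_subset_Pow: "t > 0 \<Longrightarrow> path_families t A B \<subseteq> Pow (Pow (A \<times> B))"
  using tpath_vertices(3) path_families_tpath by blast

lemma finite_families: "t > 0 \<Longrightarrow> finite A \<Longrightarrow> finite B \<Longrightarrow> finite (path_families t A B)"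
  by (rule finite_subset[OF families_subset_Pow]) simp_all

lemma finite_coverings: "t > 0 \<Longrightarrow> finite A \<Longrightarrow> finite B \<Longrightarrow> finite (path_coverings t A B)"
  unfolding path_coverings_def by (rule finite_subset[OF _ finite_families]) auto

lemma finite_family:
  "t > 0 \<Longrightarrow> finite A \<Longrightarrow> finite B \<Longrightarrow> F \<in> path_families t A B \<Longrightarrow> finite F"
  using families_subset_Pow[of t A B] finite_subset[of F "Pow (A \<times> B)"] by blast

lemma card_coverings_le:
  assumes t: "t > 0" and fin: "finite A" "finite B" and f: "inj_on f A" and g: "inj_on g B"
  shows "card (path_coverings t A B) \<le> card (path_coverings t (f ` A) (g ` B))"
proof -
  let ?h = "image (image (map_prod f g))"
  have "inj_on ?h (Pow (Pow (A \<times> B)))"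
    using f g by (intro inj_on_image_Pow map_prod_inj_on)
  moreover have "path_coverings t A B \<subseteq> Pow (Pow (A \<times> B))"
    using families_subset_Pow[OF t, of A B] unfolding path_coverings_def by blast
  ultimately have "inj_on ?h (path_coverings t A B)" by (rule inj_on_subset)
  moreover have "?h ` path_coverings t A B \<subseteq> path_coverings t (f ` A) (g ` B)"
    by (rule image_subsetI, rule coverings_map[OF t _ f g])
  moreover have "finite (path_coverings t (f ` A) (g ` B))"
    using fin by (intro finite_coverings[OF t]) simp_all
  ultimately show ?thesis by (rule card_inj_on_le)
qed

lemma card_coverings_bij:
  assumes t: "t > 0" and fin: "finite A" "finite B"
    and f: "bij_betw f A A'" and g: "bij_betw g B B'"
  shows "card (path_coverings t A B) = card (path_coverings t A' B')"
proof (rule antisym)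
  show "card (path_coverings t A B) \<le> card (path_coverings t A' B')"
    using card_coverings_le[OF t fin, of f g] f g unfolding bij_betw_def by simp
  have f': "bij_betw (inv_into A f) A' A" and g': "bij_betw (inv_into B g) B' B"
    using f g by (simp_all add: bij_betw_inv_into)
  have "finite A'" "finite B'" using f g fin bij_betw_finite by blast+
  thus "card (path_coverings t A' B') \<le> card (path_coverings t A B)"
    using card_coverings_le[OF t, of A' B' "inv_into A f" "inv_into B g"] f' g'
    unfolding bij_betw_def by simp
qed

lemma card_coverings_eq_mu:
  assumes t: "t > 0" and fin: "finite A" "finite B" and card: "card A = m" "card B = m"
  shows "card (path_coverings t A B) = mu t m"
proof -
  obtain f where f: "bij_betw f A {..<m}"
    using finite_same_card_bij[OF fin(1), of "{..<m}"] card by auto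
  obtain g where g: "bij_betw g B {..<m}"
    using finite_same_card_bij[OF fin(2), of "{..<m}"] card by auto
  show ?thesis unfolding mu_def using card_coverings_bij[OF t fin f g] .
qed

definition lefts :: "('a \<times> 'b) set set \<Rightarrow> 'a set" where
  "lefts F = (\<Union>P\<in>F. fst ` P)"

definition rights :: "('a \<times> 'b) set set \<Rightarrow> 'b set" where
  "rights F = (\<Union>P\<in>F. snd ` P)"

lemma family_sides_card:
  assumes t: "odd t" and F: "F \<in> path_families t A B" and fin: "finite A" "finite B"
  shows "card (lefts F) = (t + 1) div 2 * card F" "lefts F \<subseteq> A"
    "card (rights F) = (t + 1) div 2 * card F" "rights F \<subseteq> B"
proof -
  have t0: "t > 0" using t by (cases t) auto
  have finF: "finite F" using finite_family[OF t0 fin F] .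
  have sub: "P \<subseteq> A \<times> B" if "P \<in> F" for P
    using tpath_vertices(3)[OF t0 path_families_tpath[OF F that]] .
  hence finP: "finite P" if "P \<in> F" for P using that fin finite_subset by blast
  have disj: "fst ` P \<inter> fst ` Q = {}" "snd ` P \<inter> snd ` Q = {}"
    if "P \<in> F" "Q \<in> F" "P \<noteq> Q" for P Q
  proof -
    have "pverts P \<inter> pverts Q = {}" using path_families_disjoint[OF F that] .
    thus "fst ` P \<inter> fst ` Q = {}" "snd ` P \<inter> snd ` Q = {}"
      unfolding pverts_def by blast+
  qed
  have "card (lefts F) = (\<Sum>P\<in>F. card (fst ` P))"
    unfolding lefts_def by (rule card_UN_disjoint[OF finF]) (use finP disj in auto)
  also have "\<dots> = (\<Sum>P\<in>F. (t + 1) div 2)"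
    using tpath_sides_card(1)[OF t path_families_tpath[OF F]] by simp
  finally show "card (lefts F) = (t + 1) div 2 * card F" by simp
  have "card (rights F) = (\<Sum>P\<in>F. card (snd ` P))"
    unfolding rights_def by (rule card_UN_disjoint[OF finF]) (use finP disj in auto)
  also have "\<dots> = (\<Sum>P\<in>F. (t + 1) div 2)"
    using tpath_sides_card(2)[OF t path_families_tpath[OF F]] by simp
  finally show "card (rights F) = (t + 1) div 2 * card F" by simp
  show "lefts F \<subseteq> A" "rights F \<subseteq> B" unfolding lefts_def rights_def using sub by force+
qed

lemma card_complement_coverings:
  assumes t: "odd t" and fin: "finite V" and F: "F \<in> path_families t V V"
  shows "card (path_coverings t (V - lefts F) (V - rights F)) = mu t (card V - (t + 1) div 2 * card F)"
proof -
  have t0: "t > 0" using t by (cases t) auto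
  note sides = family_sides_card[OF t F fin fin]
  have "finite (lefts F)" "finite (rights F)" using sides fin finite_subset by blast+
  hence "card (V - lefts F) = card V - (t + 1) div 2 * card F"
        "card (V - rights F) = card V - (t + 1) div 2 * card F"
    using sides by (simp_all add: card_Diff_subset)
  thus ?thesis using card_coverings_eq_mu[OF t0 finite_Diff[OF fin] finite_Diff[OF fin]] by blast
qed

lemma Lfun_bound:
  assumes "degree p \<le> D"
  shows "Lfun t p = (\<Sum>i\<le>D. coeff p i * int (mu t i))"
  unfolding Lfun_def
  by (rule sum.mono_neutral_left) (use assms in \<open>auto simp: coeff_eq_0\<close>)

lemma Lfun_add: "Lfun t (p + q) = Lfun t p + Lfun t q"
proof -
  let ?D = "max (degree p) (degree q)"
  have "Lfun t (p + q) = (\<Sum>i\<le>?D. coeff (p + q) i * int (mu t i))"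
    by (rule Lfun_bound) (metis degree_add_le max.cobounded1 max.cobounded2)
  also have "\<dots> = (\<Sum>i\<le>?D. coeff p i * int (mu t i)) + (\<Sum>i\<le>?D. coeff q i * int (mu t i))"
    by (simp add: sum.distrib algebra_simps)
  also have "\<dots> = Lfun t p + Lfun t q"
    by (simp add: Lfun_bound[symmetric])
  finally show ?thesis .
qed

lemma Lfun_sum: "finite S \<Longrightarrow> Lfun t (\<Sum>x\<in>S. p x) = (\<Sum>x\<in>S. Lfun t (p x))"
  by (induction S rule: finite_induct) (simp add: Lfun_def, simp add: Lfun_add)

lemma Lfun_monom: "Lfun t (monom c d) = c * int (mu t d)"
proof -
  have "Lfun t (monom c d) = (\<Sum>i\<le>d. coeff (monom c d) i * int (mu t i))"
    by (rule Lfun_bound) (simp add: degree_monom_le)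
  also have "\<dots> = (\<Sum>i\<le>d. (if i = d then c * int (mu t d) else 0))"
    by (rule sum.cong) (auto simp: coeff_monom)
  finally show ?thesis by simp
qed

section \<open>Extending a family to a covering\<close>

lemma Inl_covered_iff: "Inl a \<in> (\<Union>P\<in>F. pverts P) \<longleftrightarrow> a \<in> lefts F"
  unfolding lefts_def by (simp add: pverts_Inl_iff)

lemma Inr_covered_iff: "Inr b \<in> (\<Union>P\<in>F. pverts P) \<longleftrightarrow> b \<in> rights F"
  unfolding rights_def by (simp add: pverts_Inr_iff)

lemma uncovered_vertices:
  "Inl ` (A - lefts F) \<union> Inr ` (B - rights F) = (Inl ` A \<union> Inr ` B) - (\<Union>P\<in>F. pverts P)"
proof (rule set_eqI)
  fix x
  show "x \<in> Inl ` (A - lefts F) \<union> Inr ` (B - rights F) \<longleftrightarrow>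
        x \<in> (Inl ` A \<union> Inr ` B) - (\<Union>P\<in>F. pverts P)"
  proof (cases x)
    case (Inl a) thus ?thesis using Inl_covered_iff[of a F] by auto
  next
    case (Inr b) thus ?thesis using Inr_covered_iff[of b F] by auto
  qed
qed

lemma family_vertices:
  "t > 0 \<Longrightarrow> F \<in> path_families t A B \<Longrightarrow> (\<Union>P\<in>F. pverts P) \<subseteq> Inl ` A \<union> Inr ` B"
  using tpath_vertices(1) path_families_tpath by blast

lemma covering_union:
  assumes t: "t > 0" and F: "F \<in> path_families t A B"
    and G: "G \<in> path_coverings t (A - lefts F) (B - rights F)"
  shows "F \<union> G \<in> path_coverings t A B" "F \<inter> G = {}"
proof -
  let ?U = "\<Union>P\<in>F. pverts P"
  have G1: "G \<in> path_families t (A - lefts F) (B - rights F)"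
    and G2: "(\<Union>P\<in>G. pverts P) = Inl ` (A - lefts F) \<union> Inr ` (B - rights F)"
    using G unfolding path_coverings_def by auto
  have Gtp: "P \<in> tpaths t A B" if "P \<in> G" for P
    using path_families_tpath[OF G1 that] tpaths_mono[of "A - lefts F" A "B - rights F" B t] by blast
  have Gv: "pverts P \<inter> ?U = {}" if "P \<in> G" for P
    using tpath_vertices(1)[OF t path_families_tpath[OF G1 that]] uncovered_vertices[of A F B] by blast
  show "F \<inter> G = {}"
  proof (rule ccontr)
    assume "F \<inter> G \<noteq> {}"
    then obtain P where "P \<in> F" "P \<in> G" by blast
    thus False using Gv[of P] tpath_vertices(2)[OF t Gtp[of P]] by blast
  qed
  have fam: "F \<union> G \<in> path_families t A B"
    unfolding path_families_def
  proof (intro CollectI conjI ballI impI subsetI)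
    fix P assume "P \<in> F \<union> G"
    thus "P \<in> tpaths t A B" using path_families_tpath[OF F] Gtp by blast
  next
    fix P Q assume PQ: "P \<in> F \<union> G" "Q \<in> F \<union> G" "P \<noteq> Q"
    consider "P \<in> F" "Q \<in> F" | "P \<in> G" "Q \<in> G" | "P \<in> G" "Q \<in> F" | "P \<in> F" "Q \<in> G"
      using PQ(1,2) by blast
    thus "pverts P \<inter> pverts Q = {}"
    proof cases
      case 1 thus ?thesis using path_families_disjoint[OF F _ _ PQ(3)] by blast
    next
      case 2 thus ?thesis using path_families_disjoint[OF G1 _ _ PQ(3)] by blast
    next
      case 3 thus ?thesis using Gv[of P] by blast
    next
      case 4 thus ?thesis using Gv[of Q] by blast
    qed
  qed
  have "(\<Union>P\<in>F \<union> G. pverts P) = ?U \<union> (\<Union>P\<in>G. pverts P)" by simp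
  also have "\<dots> = ?U \<union> ((Inl ` A \<union> Inr ` B) - ?U)" using G2 uncovered_vertices[of A F B] by simp
  also have "\<dots> = Inl ` A \<union> Inr ` B"
    using family_vertices[OF t F] by (simp add: Un_Diff_cancel Un_absorb1)
  finally show "F \<union> G \<in> path_coverings t A B" using fam unfolding path_coverings_def by blast
qed

lemma covering_diff:
  assumes t: "t > 0" and H: "H \<in> path_coverings t A B" and FH: "F \<subseteq> H"
  shows "F \<in> path_families t A B" "H - F \<in> path_coverings t (A - lefts F) (B - rights F)"
proof -
  let ?U = "\<Union>P\<in>F. pverts P"
  have H1: "H \<in> path_families t A B" and H2: "(\<Union>P\<in>H. pverts P) = Inl ` A \<union> Inr ` B"
    using H unfolding path_coverings_def by auto
  show "F \<in> path_families t A B" using H1 FH unfolding path_families_def by blast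
  have disj: "pverts P \<inter> ?U = {}" if "P \<in> H - F" for P
    using path_families_disjoint[OF H1] that FH by blast
  have tp: "P \<in> tpaths t (A - lefts F) (B - rights F)" if P: "P \<in> H - F" for P
  proof -
    have "P \<in> tpaths t A B" using path_families_tpath[OF H1] P by blast
    hence unrestricted: "P \<in> tpaths t UNIV UNIV" and "pverts P \<subseteq> Inl ` A \<union> Inr ` B"
      using tpaths_restrict[OF t, of P A B] by simp_all
    hence "pverts P \<subseteq> (Inl ` A \<union> Inr ` B) - ?U" using disj[OF P] by blast
    hence "pverts P \<subseteq> Inl ` (A - lefts F) \<union> Inr ` (B - rights F)"
      by (simp only: uncovered_vertices)
    thus ?thesis using unrestricted tpaths_restrict[OF t, of P "A - lefts F" "B - rights F"] by simp
  qed
  have fam: "H - F \<in> path_families t (A - lefts F) (B - rights F)"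
    unfolding path_families_def using tp path_families_disjoint[OF H1] by blast
  have "(\<Union>P\<in>H - F. pverts P) = (\<Union>P\<in>H. pverts P) - ?U"
  proof
    show "(\<Union>P\<in>H - F. pverts P) \<subseteq> (\<Union>P\<in>H. pverts P) - ?U" using disj by blast
    show "(\<Union>P\<in>H. pverts P) - ?U \<subseteq> (\<Union>P\<in>H - F. pverts P)" by blast
  qed
  also have "\<dots> = Inl ` (A - lefts F) \<union> Inr ` (B - rights F)"
    using H2 uncovered_vertices[of A F B] by simp
  finally show "H - F \<in> path_coverings t (A - lefts F) (B - rights F)"
    using fam unfolding path_coverings_def by blast
qed

lemma extension_pairs_bij:
  assumes t: "t > 0"
  shows "bij_betw (\<lambda>(H, F). (F, H - F))
           (SIGMA H:path_coverings t A B. Pow {P\<in>H. Q P})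
           (SIGMA F:{F\<in>path_families t A B. \<forall>P\<in>F. Q P}. path_coverings t (A - lefts F) (B - rights F))"
proof (rule bij_betw_byWitness[where f' = "\<lambda>(F, G). (F \<union> G, F)"])
  show "\<forall>p\<in>SIGMA H:path_coverings t A B. Pow {P\<in>H. Q P}.
          (\<lambda>(F, G). (F \<union> G, F)) ((\<lambda>(H, F). (F, H - F)) p) = p" by auto
  show "\<forall>p\<in>SIGMA F:{F\<in>path_families t A B. \<forall>P\<in>F. Q P}. path_coverings t (A - lefts F) (B - rights F).
          (\<lambda>(H, F). (F, H - F)) ((\<lambda>(F, G). (F \<union> G, F)) p) = p"
  proof
    fix p assume "p \<in> (SIGMA F:{F\<in>path_families t A B. \<forall>P\<in>F. Q P}.
                         path_coverings t (A - lefts F) (B - rights F))"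
    then obtain F G where p: "p = (F, G)" "F \<in> path_families t A B"
      "G \<in> path_coverings t (A - lefts F) (B - rights F)" by blast
    have "F \<inter> G = {}" using covering_union(2)[OF t p(2,3)] .
    thus "(\<lambda>(H, F). (F, H - F)) ((\<lambda>(F, G). (F \<union> G, F)) p) = p" using p(1) by auto
  qed
  show "(\<lambda>(H, F). (F, H - F)) ` (SIGMA H:path_coverings t A B. Pow {P\<in>H. Q P})
        \<subseteq> (SIGMA F:{F\<in>path_families t A B. \<forall>P\<in>F. Q P}. path_coverings t (A - lefts F) (B - rights F))"
  proof
    fix x assume "x \<in> (\<lambda>(H, F). (F, H - F)) ` (SIGMA H:path_coverings t A B. Pow {P\<in>H. Q P})"
    then obtain H F where x: "x = (F, H - F)" "H \<in> path_coverings t A B" "F \<subseteq> {P\<in>H. Q P}"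
      by auto
    hence "F \<subseteq> H" "\<forall>P\<in>F. Q P" by auto
    thus "x \<in> (SIGMA F:{F\<in>path_families t A B. \<forall>P\<in>F. Q P}. path_coverings t (A - lefts F) (B - rights F))"
      using covering_diff[OF t x(2)] x(1) by blast
  qed
  show "(\<lambda>(F, G). (F \<union> G, F)) `
          (SIGMA F:{F\<in>path_families t A B. \<forall>P\<in>F. Q P}. path_coverings t (A - lefts F) (B - rights F))
        \<subseteq> (SIGMA H:path_coverings t A B. Pow {P\<in>H. Q P})"
  proof
    fix x assume "x \<in> (\<lambda>(F, G). (F \<union> G, F)) `
          (SIGMA F:{F\<in>path_families t A B. \<forall>P\<in>F. Q P}. path_coverings t (A - lefts F) (B - rights F))"
    then obtain F G where x: "x = (F \<union> G, F)" "F \<in> path_families t A B" "\<forall>P\<in>F. Q P"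
      "G \<in> path_coverings t (A - lefts F) (B - rights F)" by auto
    thus "x \<in> (SIGMA H:path_coverings t A B. Pow {P\<in>H. Q P})"
      using covering_union(1)[OF t x(2,4)] by blast
  qed
qed

lemma alternating_sum_Pow:
  assumes "finite X"
  shows "(\<Sum>Y\<in>Pow X. (-1::int) ^ card Y) = (if X = {} then 1 else 0)"
proof -
  have "(\<Prod>x\<in>X. (1::int) - 1) = (\<Sum>Y\<in>Pow X. (-1) ^ card Y * (\<Prod>x\<in>Y. 1) * (\<Prod>x\<in>X-Y. 1))"
    by (rule prod_diff_conv_sum[OF assms])
  hence "(\<Sum>Y\<in>Pow X. (-1::int) ^ card Y) = (\<Prod>x\<in>X. (0::int))" by simp
  also have "\<dots> = (if X = {} then 1 else 0)" using assms by (simp add: card_gt_0_iff)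
  finally show ?thesis .
qed

lemma inclusion_exclusion_coverings:
  assumes t: "t > 0" and fin: "finite A" "finite B"
  shows "(\<Sum>F\<in>{F\<in>path_families t A B. \<forall>P\<in>F. Q P}.
            (-1::int) ^ card F * int (card (path_coverings t (A - lefts F) (B - rights F))))
         = int (card {H\<in>path_coverings t A B. \<forall>P\<in>H. \<not> Q P})"
proof -
  define S where "S = {F\<in>path_families t A B. \<forall>P\<in>F. Q P}"
  define C where "C F = path_coverings t (A - lefts F) (B - rights F)" for F
  define Cv where "Cv = path_coverings t A B"
  have finS: "finite S" unfolding S_def using finite_families[OF t fin] by simp
  have finC: "finite (C F)" for F unfolding C_def using fin by (simp add: finite_coverings[OF t])
  have finCv: "finite Cv" unfolding Cv_def by (rule finite_coverings[OF t fin])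
  have finH: "finite H" if "H \<in> Cv" for H
    using that finite_family[OF t fin] unfolding Cv_def path_coverings_def by blast
  have "(\<Sum>F\<in>S. (-1::int) ^ card F * int (card (C F))) = (\<Sum>F\<in>S. \<Sum>G\<in>C F. (-1::int) ^ card F)"
    by (simp add: mult.commute)
  also have "\<dots> = (\<Sum>p\<in>Sigma S C. (-1::int) ^ card (fst p))"
    using sum.Sigma[OF finS, of C "\<lambda>F G. (-1::int) ^ card F"] finC by (simp add: split_def)
  also have "\<dots> = (\<Sum>q\<in>(SIGMA H:Cv. Pow {P\<in>H. Q P}). (-1::int) ^ card (snd q))"
    using sum.reindex_bij_betw[OF extension_pairs_bij[OF t, of A B Q],
          of "\<lambda>p. (-1::int) ^ card (fst p)", symmetric]
    unfolding S_def C_def Cv_def by (simp add: split_def)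
  also have "\<dots> = (\<Sum>H\<in>Cv. \<Sum>F\<in>Pow {P\<in>H. Q P}. (-1::int) ^ card F)"
    using sum.Sigma[OF finCv, of "\<lambda>H. Pow {P\<in>H. Q P}" "\<lambda>H F. (-1::int) ^ card F"] finH
    by (simp add: split_def)
  also have "\<dots> = (\<Sum>H\<in>Cv. if \<forall>P\<in>H. \<not> Q P then 1 else 0)"
    using finH by (intro sum.cong refl) (simp add: alternating_sum_Pow)
  also have "\<dots> = int (card {H\<in>Cv. \<forall>P\<in>H. \<not> Q P})"
    using sum.inter_filter[OF finCv, of "\<lambda>_. (1::int)" "\<lambda>H. \<forall>P\<in>H. \<not> Q P"] by simp
  finally show ?thesis unfolding S_def C_def Cv_def .
qed

section \<open>Homogeneous families in a disjoint union of blocks\<close>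

definition embed :: "nat \<Rightarrow> (nat \<times> nat) set \<Rightarrow> ((nat \<times> nat) \<times> (nat \<times> nat)) set" where
  "embed i Q = map_prod (Pair i) (Pair i) ` Q"

definition unembed :: "((nat \<times> nat) \<times> (nat \<times> nat)) set \<Rightarrow> (nat \<times> nat) set" where
  "unembed P = map_prod snd snd ` P"

definition block_edges :: "nat \<Rightarrow> ((nat \<times> nat) \<times> (nat \<times> nat)) set" where
  "block_edges i = {(x, y). fst x = i \<and> fst y = i}"

definition homogeneous :: "((nat \<times> nat) \<times> (nat \<times> nat)) set \<Rightarrow> bool" where
  "homogeneous P \<longleftrightarrow> (\<exists>i. \<forall>v\<in>pverts P. blk v = i)"

definition homogeneous_families :: "nat \<Rightarrow> nat list \<Rightarrow> ((nat \<times> nat) \<times> (nat \<times> nat)) set set set" where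
  "homogeneous_families t ns =
     {F \<in> path_families t (blocks ns) (blocks ns). \<forall>P\<in>F. homogeneous P}"

definition block_families :: "nat \<Rightarrow> nat list \<Rightarrow> nat \<Rightarrow> (nat \<times> nat) set set set" where
  "block_families t ns i = path_families t {..<ns ! i} {..<ns ! i}"

definition glue :: "nat list \<Rightarrow> (nat \<Rightarrow> (nat \<times> nat) set set) \<Rightarrow> ((nat \<times> nat) \<times> (nat \<times> nat)) set set" where
  "glue ns Fs = (\<Union>i<length ns. embed i ` Fs i)"

lemma unembed_embed: "unembed (embed i Q) = Q"
  unfolding unembed_def embed_def by (force simp: image_image)

lemma embed_unembed: "P \<subseteq> block_edges i \<Longrightarrow> embed i (unembed P) = P"
  unfolding unembed_def embed_def block_edges_def by (force simp: image_image)

lemma inj_embed: "inj (embed i)"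
  by (rule inj_on_inverseI[where g = unembed]) (rule unembed_embed)

lemma embed_block_edges: "embed i Q \<subseteq> block_edges i"
  unfolding embed_def block_edges_def by auto

lemma embed_in_block: "Q \<noteq> {} \<Longrightarrow> embed i Q \<subseteq> block_edges j \<Longrightarrow> j = i"
  unfolding embed_def block_edges_def by auto

lemma pverts_embed: "pverts (embed i Q) \<subseteq> {v. blk v = i}"
  unfolding pverts_def embed_def by (auto simp: blk_def)

lemma blocks_Sigma: "blocks ns = Sigma {..<length ns} (\<lambda>i. {..<ns ! i})"
  unfolding blocks_def by auto

lemma block_part: "i < length ns \<Longrightarrow> {x \<in> blocks ns. fst x = i} = Pair i ` {..<ns ! i}"
  unfolding blocks_def by auto

lemma embed_tpath:
  assumes t: "t > 0" and i: "i < length ns" and Q: "Q \<in> tpaths t {..<ns ! i} {..<ns ! i}"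
  shows "embed i Q \<in> tpaths t (blocks ns) (blocks ns)"
proof -
  have "embed i Q \<in> tpaths t (Pair i ` {..<ns ! i}) (Pair i ` {..<ns ! i})"
    unfolding embed_def by (rule tpaths_map[OF t Q]) (simp_all add: inj_on_def)
  moreover have "Pair i ` {..<ns ! i} \<subseteq> blocks ns" using block_part[OF i] by blast
  ultimately show ?thesis using tpaths_mono by blast
qed

lemma block_families_tpath:
  "Fs \<in> PiE {..<length ns} (block_families t ns) \<Longrightarrow> i < length ns \<Longrightarrow> Q \<in> Fs i
   \<Longrightarrow> Q \<in> tpaths t {..<ns ! i} {..<ns ! i}"
  unfolding block_families_def using path_families_tpath by blast

lemma glue_block:
  assumes t: "t > 0" and Fs: "Fs \<in> PiE {..<length ns} (block_families t ns)" and i: "i < length ns"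
  shows "{P \<in> glue ns Fs. P \<subseteq> block_edges i} = embed i ` Fs i"
proof
  show "embed i ` Fs i \<subseteq> {P \<in> glue ns Fs. P \<subseteq> block_edges i}"
    using i embed_block_edges unfolding glue_def by blast
  show "{P \<in> glue ns Fs. P \<subseteq> block_edges i} \<subseteq> embed i ` Fs i"
  proof
    fix P assume P: "P \<in> {P \<in> glue ns Fs. P \<subseteq> block_edges i}"
    then obtain j Q where jQ: "j < length ns" "Q \<in> Fs j" "P = embed j Q"
      unfolding glue_def by blast
    have "Q \<noteq> {}" using tpath_vertices(4)[OF t block_families_tpath[OF Fs jQ(1,2)]] .
    hence "i = j" using embed_in_block P jQ(3) by blast
    thus "P \<in> embed i ` Fs i" using jQ by blast
  qed
qed

lemma glue_inj:
  assumes t: "t > 0"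
  shows "inj_on (glue ns) (PiE {..<length ns} (block_families t ns))"
proof (rule inj_onI)
  fix Fs Gs assume Fs: "Fs \<in> PiE {..<length ns} (block_families t ns)"
    and Gs: "Gs \<in> PiE {..<length ns} (block_families t ns)" and eq: "glue ns Fs = glue ns Gs"
  show "Fs = Gs"
  proof (rule PiE_ext[OF Fs Gs])
    fix i assume "i \<in> {..<length ns}"
    hence "embed i ` Fs i = embed i ` Gs i" using glue_block[OF t Fs] glue_block[OF t Gs] eq by simp
    thus "Fs i = Gs i" using inj_embed by (simp add: inj_image_eq_iff)
  qed
qed

lemma glue_homogeneous:
  assumes t: "t > 0" and Fs: "Fs \<in> PiE {..<length ns} (block_families t ns)"
  shows "glue ns Fs \<in> homogeneous_families t ns"
proof -
  have tp: "P \<in> tpaths t (blocks ns) (blocks ns)" if "P \<in> glue ns Fs" for P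
    using that embed_tpath[OF t _ block_families_tpath[OF Fs]] unfolding glue_def by blast
  have disj: "pverts P \<inter> pverts P' = {}"
    if PP: "P \<in> glue ns Fs" "P' \<in> glue ns Fs" "P \<noteq> P'" for P P'
  proof -
    obtain i Q where iQ: "i < length ns" "Q \<in> Fs i" "P = embed i Q"
      using PP(1) unfolding glue_def by blast
    obtain i' Q' where iQ': "i' < length ns" "Q' \<in> Fs i'" "P' = embed i' Q'"
      using PP(2) unfolding glue_def by blast
    show ?thesis
    proof (cases "i = i'")
      case True
      have "Fs i \<in> path_families t {..<ns ! i} {..<ns ! i}"
        using Fs iQ(1) unfolding block_families_def by blast
      hence "embed i ` Fs i \<in> path_families t (Pair i ` {..<ns ! i}) (Pair i ` {..<ns ! i})"
        using families_map[OF t, of _ _ _ "Pair i" "Pair i"] unfolding embed_def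
        by (simp add: inj_on_def)
      moreover have "P \<in> embed i ` Fs i" "P' \<in> embed i ` Fs i" using iQ iQ' True by auto
      ultimately show ?thesis using path_families_disjoint PP(3) by blast
    next
      case False
      thus ?thesis using pverts_embed[of i Q] pverts_embed[of i' Q'] iQ(3) iQ'(3) by blast
    qed
  qed
  have "homogeneous P" if "P \<in> glue ns Fs" for P
    using that pverts_embed unfolding glue_def homogeneous_def by blast
  thus ?thesis unfolding homogeneous_families_def path_families_def using tp disj by blast
qed

lemma homogeneous_in_block:
  assumes t: "t > 0" and F: "F \<in> homogeneous_families t ns" and P: "P \<in> F"
  shows "\<exists>i<length ns. P \<subseteq> block_edges i"
proof -
  have tp: "P \<in> tpaths t (blocks ns) (blocks ns)" and "homogeneous P"
    using F P path_families_tpath unfolding homogeneous_families_def by auto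
  then obtain i where i: "\<forall>v\<in>pverts P. blk v = i" unfolding homogeneous_def by blast
  obtain v where v: "v \<in> pverts P" using tpath_vertices(2)[OF t tp] by blast
  have "v \<in> Inl ` blocks ns \<union> Inr ` blocks ns" using tpath_vertices(1)[OF t tp] v by blast
  hence "i < length ns" using i v unfolding blocks_def blk_def by auto
  moreover have "P \<subseteq> block_edges i"
  proof
    fix x assume x: "x \<in> P"
    obtain a b where ab: "x = (a, b)" by (cases x)
    have "Inl a \<in> pverts P" "Inr b \<in> pverts P" using x ab unfolding pverts_def by force+
    hence "fst a = i" "fst b = i" using i unfolding blk_def by force+
    thus "x \<in> block_edges i" using ab unfolding block_edges_def by simp
  qed
  ultimately show ?thesis by blast
qed

lemma unembed_block_family:
  assumes t: "t > 0" and F: "F \<in> path_families t (blocks ns) (blocks ns)" and i: "i < length ns"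
  shows "unembed ` {P\<in>F. P \<subseteq> block_edges i} \<in> block_families t ns i"
proof -
  let ?B = "{x \<in> blocks ns. fst x = i}"
  let ?G = "{P\<in>F. P \<subseteq> block_edges i}"
  have G: "?G \<in> path_families t ?B ?B"
    unfolding path_families_def
  proof (intro CollectI conjI subsetI ballI impI)
    fix P assume P: "P \<in> ?G"
    have tp: "P \<in> tpaths t (blocks ns) (blocks ns)" using path_families_tpath[OF F] P by blast
    have "P \<subseteq> blocks ns \<times> blocks ns" using tpath_vertices(3)[OF t tp] .
    hence "P \<subseteq> ?B \<times> ?B" using P unfolding block_edges_def by auto
    hence "pverts P \<subseteq> Inl ` ?B \<union> Inr ` ?B" by (simp add: pverts_subset_iff)
    thus "P \<in> tpaths t ?B ?B" using tp tpaths_restrict[OF t] by blast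
  next
    fix P Q assume "P \<in> ?G" "Q \<in> ?G" "P \<noteq> Q"
    thus "pverts P \<inter> pverts Q = {}" using path_families_disjoint[OF F] by blast
  qed
  have inj: "inj_on snd ?B" by (auto simp: inj_on_def prod_eq_iff)
  have "snd ` ?B = {..<ns ! i}" using block_part[OF i] by (simp add: image_image)
  thus ?thesis using families_map[OF t G inj inj]
    unfolding unembed_def block_families_def by simp
qed

lemma glue_surj:
  assumes t: "t > 0" and F: "F \<in> homogeneous_families t ns"
  shows "F \<in> glue ns ` PiE {..<length ns} (block_families t ns)"
proof -
  have F1: "F \<in> path_families t (blocks ns) (blocks ns)"
    using F unfolding homogeneous_families_def by auto
  define Fs where "Fs = (\<lambda>i\<in>{..<length ns}. unembed ` {P\<in>F. P \<subseteq> block_edges i})"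
  have Fs: "Fs \<in> PiE {..<length ns} (block_families t ns)"
    unfolding Fs_def restrict_PiE_iff using unembed_block_family[OF t F1] by blast
  have "glue ns Fs = (\<Union>i<length ns. embed i ` unembed ` {P\<in>F. P \<subseteq> block_edges i})"
    unfolding glue_def Fs_def by simp
  also have "\<dots> = (\<Union>i<length ns. {P\<in>F. P \<subseteq> block_edges i})"
  proof (rule SUP_cong[OF refl])
    fix i show "embed i ` unembed ` {P\<in>F. P \<subseteq> block_edges i} = {P\<in>F. P \<subseteq> block_edges i}"
      using embed_unembed[of _ i] by (force simp: image_image)
  qed
  also have "\<dots> = F" using homogeneous_in_block[OF t F] by blast
  finally show ?thesis using Fs by blast
qed

lemma glue_bij:
  assumes t: "t > 0"
  shows "bij_betw (glue ns) (PiE {..<length ns} (block_families t ns)) (homogeneous_families t ns)"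
  unfolding bij_betw_def using glue_inj[OF t] glue_homogeneous[OF t] glue_surj[OF t] by blast

lemma card_glue:
  assumes t: "t > 0" and Fs: "Fs \<in> PiE {..<length ns} (block_families t ns)"
  shows "card (glue ns Fs) = (\<Sum>i<length ns. card (Fs i))"
proof -
  have fin: "finite (Fs i)" if "i < length ns" for i
    using Fs that finite_family[OF t, of "{..<ns ! i}" "{..<ns ! i}"]
    unfolding block_families_def by blast
  have disj: "embed i ` Fs i \<inter> embed j ` Fs j = {}" if i: "i < length ns" and "i \<noteq> j" for i j
  proof (rule ccontr)
    assume "embed i ` Fs i \<inter> embed j ` Fs j \<noteq> {}"
    then obtain Q Q' where Q: "Q \<in> Fs i" and eq: "embed i Q = embed j Q'" by blast
    have "Q \<noteq> {}" using tpath_vertices(4)[OF t block_families_tpath[OF Fs i Q]] .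
    thus False using embed_in_block[of Q i j] embed_block_edges[of j Q'] eq \<open>i \<noteq> j\<close> by simp
  qed
  have "card (glue ns Fs) = (\<Sum>i<length ns. card (embed i ` Fs i))"
    unfolding glue_def by (rule card_UN_disjoint) (use fin disj in auto)
  also have "\<dots> = (\<Sum>i<length ns. card (Fs i))"
    using card_image[OF inj_on_subset[OF inj_embed subset_UNIV]] by simp
  finally show ?thesis .
qed

section \<open>Expansion of the product of the polynomials L_n\<close>

lemma prod_monom:
  "finite I \<Longrightarrow> (\<Prod>i\<in>I. monom (c i) (d i)) = monom (\<Prod>i\<in>I. c i) (\<Sum>i\<in>I. d i)"
  by (induction I rule: finite_induct) (simp_all add: mult_monom monom_0 one_pCons)

lemma prod_list_map_nth:
  "prod_list (map (f :: 'a \<Rightarrow> 'b :: comm_monoid_mult) xs) = (\<Prod>i<length xs. f (xs ! i))"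
  by (induction xs) (simp_all add: prod.lessThan_Suc_shift del: prod.lessThan_Suc)

lemma card_blocks: "card (blocks ns) = (\<Sum>i<length ns. ns ! i)"
  by (simp add: blocks_Sigma)

text \<open>A family in K_{n,n} has at most n/k paths, so the exponents in L_n are not truncated.\<close>
lemma family_size_bound:
  assumes t: "odd t" and F: "F \<in> path_families t {..<n} {..<n}"
  shows "(t + 1) div 2 * card F \<le> n"
  using family_sides_card(1,2)[OF t F] card_mono[of "{..<n}" "lefts F"] by simp

lemma glue_monomial:
  assumes t: "odd t" and Fs: "Fs \<in> PiE {..<length ns} (block_families t ns)"
  shows "(\<Prod>i<length ns. monom ((-1::int) ^ card (Fs i)) (ns ! i - (t + 1) div 2 * card (Fs i)))
       = monom ((-1) ^ card (glue ns Fs)) (card (blocks ns) - (t + 1) div 2 * card (glue ns Fs))"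
proof -
  define k where "k = (t + 1) div 2"
  have t0: "t > 0" using t by (cases t) auto
  have bound: "k * card (Fs i) \<le> ns ! i" if "i \<in> {..<length ns}" for i
    using family_size_bound[OF t] Fs that unfolding block_families_def k_def by blast
  have "(\<Prod>i<length ns. monom ((-1::int) ^ card (Fs i)) (ns ! i - k * card (Fs i)))
      = monom (\<Prod>i<length ns. (-1) ^ card (Fs i)) (\<Sum>i<length ns. ns ! i - k * card (Fs i))"
    by (rule prod_monom) simp
  also have "(\<Prod>i<length ns. (-1::int) ^ card (Fs i)) = (-1) ^ (\<Sum>i<length ns. card (Fs i))"
    by (simp add: power_sum)
  also have "(\<Sum>i<length ns. ns ! i - k * card (Fs i))
      = (\<Sum>i<length ns. ns ! i) - (\<Sum>i<length ns. k * card (Fs i))"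
    by (rule sum_subtractf_nat) (use bound in auto)
  also have "(\<Sum>i<length ns. k * card (Fs i)) = k * (\<Sum>i<length ns. card (Fs i))"
    by (simp add: sum_distrib_left)
  finally show ?thesis using card_glue[OF t0 Fs] card_blocks[of ns] by (simp add: k_def)
qed

lemma Lpoly_product:
  assumes t: "odd t"
  shows "(\<Prod>n\<leftarrow>ns. Lpoly t n) = (\<Sum>F\<in>homogeneous_families t ns.
           monom ((-1) ^ card F) (card (blocks ns) - (t + 1) div 2 * card F))"
proof -
  have t0: "t > 0" using t by (cases t) auto
  have fin: "finite (block_families t ns i)" for i
    unfolding block_families_def by (rule finite_families[OF t0]) simp_all
  have "(\<Prod>n\<leftarrow>ns. Lpoly t n) = (\<Prod>i<length ns. Lpoly t (ns ! i))"
    by (rule prod_list_map_nth)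
  also have "\<dots> = (\<Prod>i<length ns. \<Sum>F\<in>block_families t ns i.
                     monom ((-1) ^ card F) (ns ! i - (t + 1) div 2 * card F))"
    unfolding Lpoly_def block_families_def by simp
  also have "\<dots> = (\<Sum>Fs\<in>PiE {..<length ns} (block_families t ns). \<Prod>i<length ns.
                     monom ((-1) ^ card (Fs i)) (ns ! i - (t + 1) div 2 * card (Fs i)))"
    by (rule prod_sum_PiE) (simp_all add: fin)
  also have "\<dots> = (\<Sum>Fs\<in>PiE {..<length ns} (block_families t ns).
                     monom ((-1) ^ card (glue ns Fs)) (card (blocks ns) - (t + 1) div 2 * card (glue ns Fs)))"
    using glue_monomial[OF t] by (intro sum.cong refl)
  also have "\<dots> = (\<Sum>F\<in>homogeneous_families t ns.
                     monom ((-1) ^ card F) (card (blocks ns) - (t + 1) div 2 * card F))"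
    by (rule sum.reindex_bij_betw[OF glue_bij[OF t0]])
  finally show ?thesis .
qed

theorem mainTheorem16:
  fixes t :: nat and ns :: "nat list"
  assumes "odd t"
  shows "Lfun t (\<Prod>n\<leftarrow>ns. Lpoly t n) = int (card (inhom_coverings t ns))"
proof -
  let ?V = "blocks ns" and ?H = "homogeneous_families t ns" and ?k = "(t + 1) div 2"
  have t0: "t > 0" using assms by (cases t) auto
  have finV: "finite ?V" by (simp add: blocks_Sigma)
  have finH: "finite ?H"
    unfolding homogeneous_families_def using finite_families[OF t0 finV finV] by simp
  have "Lfun t (\<Prod>n\<leftarrow>ns. Lpoly t n) = Lfun t (\<Sum>F\<in>?H. monom ((-1) ^ card F) (card ?V - ?k * card F))"
    using Lpoly_product[OF assms] by simp
  also have "\<dots> = (\<Sum>F\<in>?H. (-1) ^ card F * int (mu t (card ?V - ?k * card F)))"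
    by (simp add: Lfun_sum[OF finH] Lfun_monom)
  also have "\<dots> = (\<Sum>F\<in>?H. (-1) ^ card F * int (card (path_coverings t (?V - lefts F) (?V - rights F))))"
    using card_complement_coverings[OF assms finV]
    by (intro sum.cong refl) (simp add: homogeneous_families_def)
  also have "\<dots> = int (card {H\<in>path_coverings t ?V ?V. \<forall>P\<in>H. \<not> homogeneous P})"
    unfolding homogeneous_families_def by (rule inclusion_exclusion_coverings[OF t0 finV finV])
  also have "\<dots> = int (card (inhom_coverings t ns))"
    unfolding inhom_coverings_def homogeneous_def by simp
  finally show ?thesis .
qed

end
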